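(* Let $(Q,\infty)$, $\alpha$, $V$, $0\in I$, $L$, $\tilde Q$, $\tilde V$, $\zeta\in\mathbb R^{I}$ and $\eta\in(\mathbb Q_{>0})^{L}$ be as in the context. If a representation $\tilde\rho\in\mathrm{Rep}_{\tilde Q}(\tilde V)$ is $(\zeta,\eta)$-semistable, then the linear map $\tilde V_{(0,L)}\to V_{0}$ (attached to the arrow $(0,L)\to 0$) is an isomorphism, and the linear maps $\tilde V_{(0,k)}\to\tilde V_{(0,k+1)}$ (attached to the arrows $(0,k)\to(0,k+1)$) are injective for all $k=1,\dots,L-1$.
   Context: A framed quiver is a quiver with relations $Q=(Q_0,Q_1,Q_2)$ (vertices $Q_0$; arrows $Q_1$, an arrow $a$ going from $\mathrm{out}(a)$ to $\mathrm{in}(a)$; $Q_2$ a finite set of relations, each a linear combination of paths with common beginning $\mathrm{out}(l)$ and common ending $\mathrm{in}(l)$) together with a vertex $\infty\in Q_0$; put $I=Q_0\setminus\{\infty\}$ and assume $\mathrm{out}(l),\mathrm{in}(l)\in I$ for all $l\in Q_2$. A representation of a quiver with relations on a graded vector space is a collection of linear maps $B_a$, one for each arrow, satisfying the relations. Fix a finite-dimensional $Q_0$-graded vector space $V=\bigoplus_{v\in Q_0}V_v$ with $\dim V_\infty=1$ and put $\alpha_v=\dim V_v$, $\dim V=\sum_{v\in Q_0}\dim V_v$. Fix $0\in I$ and an integer $L\ge\alpha_0$. The enhanced quiver $\tilde Q$ has vertex set $\tilde Q_0=Q_0\sqcup\{(0,k)\mid k=1,\dots,L\}$, arrow set $Q_1$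 together with arrows $(0,k)\to(0,k+1)$ for $k=1,\dots,L-1$ and one arrow $(0,L)\to 0$, and relations $Q_2$. Let $\tilde V=V\oplus\bigoplus_{k=1}^{L}\tilde V_{(0,k)}$ be a $\tilde Q_0$-graded vector space with $\dim\tilde V_{(0,1)}\le1$, $\dim\tilde V_{(0,L)}=\alpha_0$, and $\dim\tilde V_{(0,k-1)}\le\dim\tilde V_{(0,k)}\le\dim\tilde V_{(0,k-1)}+1$ for $k=2,\dots,L-1$. For $\zeta\in\mathbb R^I$ put $\zeta_\infty=-\sum_{i\in I}\zeta_i\alpha_i$. For $\eta=(\eta_1,\dots,\eta_L)\in(\mathbb Q_{>0})^L$ and a $\tilde Q_0$-graded subspace $\tilde S=S\oplus\bigoplus_k\tilde S_{(0,k)}$ (with $S$ its $Q_0$-graded part) define $\mu_{(\zeta,\eta)}(\tilde S)=\dfrac{\sum_{v\in Q_0}\zeta_v\dim S_v+\sum_{k=1}^{L}\eta_k\dim\tilde S_{(0,k)}}{\sum_{v\in Q_0}\dim S_v}$. A representation $\tilde\rho$ of $\tilde Q$ on $\tilde V$ is $(\zeta,\eta)$-semistable if every nonzero proper sub-representation $\tilde S$ satisfies $\mu_{(\zeta,\eta)}(\tilde S)\le\mu_{(\zeta,\eta)}(\tilde V)$, where this inequality is understood in the cleared-denominator form $\big(\sum_{v}\zeta_v\dim S_v+\sum_k\eta_k\dim\tilde S_{(0,k)}\big)\dim V-\big(\sum_k\eta_k\dim\tilde V_{(0,k)}\big)\sum_v\dim S_v\le0$ (equivalent to the slope inequality when $\sum_v\dim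 S_v>0$). *)

theory Defs
  imports Complex_Main "HOL-Library.Function_Algebras"
begin

text \<open>Vectors of a graded piece of dimension n are modelled as functions
  nat => complex vanishing from index n on; linear maps as matrices.\<close>

type_synonym cvec = "nat \<Rightarrow> complex"

definition cscale :: "complex \<Rightarrow> cvec \<Rightarrow> cvec" where
  "cscale c x = (\<lambda>j. c * x j)"

definition carrier_sp :: "nat \<Rightarrow> cvec set" where
  "carrier_sp n = {x. \<forall>j\<ge>n. x j = 0}"

definition mat_app :: "nat \<Rightarrow> nat \<Rightarrow> (nat \<Rightarrow> nat \<Rightarrow> complex) \<Rightarrow> cvec \<Rightarrow> cvec" where
  "mat_app m n M x = (\<lambda>i. if i < m then (\<Sum>j<n. M i j * x j) else 0)"

definition vdim :: "cvec set \<Rightarrow> nat" where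
  "vdim S = vector_space.dim cscale S"

definition vsubspace :: "cvec set \<Rightarrow> bool" where
  "vsubspace S = module.subspace cscale S"

text \<open>Quiver with relations. A relation is (out(l), in(l), formal linear
  combination of paths); a path is a list of arrows in traversal order
  (the empty list is the trivial path).\<close>
record ('v, 'a) quiver_rel =
  verts :: "'v set"
  arrs :: "'a set"
  src :: "'a \<Rightarrow> 'v"
  tgt :: "'a \<Rightarrow> 'v"
  rels :: "('v \<times> 'v \<times> (complex \<times> 'a list) list) set"

definition is_path :: "('v, 'a) quiver_rel \<Rightarrow> 'v \<Rightarrow> 'v \<Rightarrow> 'a list \<Rightarrow> bool" where
  "is_path Q u w p \<longleftrightarrow>
     (p = [] \<and> u = w) \<or>
     (p \<noteq> [] \<and> set p \<subseteq> arrs Q \<and> src Q (hd p) = u \<and> tgt Q (last p) = w \<and>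
      (\<forall>i. i + 1 < length p \<longrightarrow> tgt Q (p ! i) = src Q (p ! (i + 1))))"

definition quiver_wf :: "('v, 'a) quiver_rel \<Rightarrow> bool" where
  "quiver_wf Q \<longleftrightarrow> finite (verts Q) \<and> finite (arrs Q) \<and> finite (rels Q) \<and>
     (\<forall>a\<in>arrs Q. src Q a \<in> verts Q \<and> tgt Q a \<in> verts Q) \<and>
     (\<forall>(u, w, ts)\<in>rels Q. u \<in> verts Q \<and> w \<in> verts Q \<and>
        (\<forall>(c, p)\<in>set ts. is_path Q u w p))"

definition framed_quiver :: "('v, 'a) quiver_rel \<Rightarrow> 'v \<Rightarrow> bool" where
  "framed_quiver Q infv \<longleftrightarrow> quiver_wf Q \<and> infv \<in> verts Q \<and>
     (\<forall>(u, w, ts)\<in>rels Q. u \<noteq> infv \<and> w \<noteq> infv)"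

definition path_map :: "('v, 'a) quiver_rel \<Rightarrow> ('v \<Rightarrow> nat) \<Rightarrow> ('a \<Rightarrow> nat \<Rightarrow> nat \<Rightarrow> complex)
    \<Rightarrow> 'a list \<Rightarrow> cvec \<Rightarrow> cvec" where
  "path_map Q d B p x = foldl (\<lambda>y a. mat_app (d (tgt Q a)) (d (src Q a)) (B a) y) x p"

definition is_rep :: "('v, 'a) quiver_rel \<Rightarrow> ('v \<Rightarrow> nat) \<Rightarrow> ('a \<Rightarrow> nat \<Rightarrow> nat \<Rightarrow> complex) \<Rightarrow> bool" where
  "is_rep Q d B \<longleftrightarrow>
     (\<forall>(u, w, ts)\<in>rels Q. \<forall>x\<in>carrier_sp (d u). \<forall>j.
        (\<Sum>(c, p)\<leftarrow>ts. c * path_map Q d B p x j) = 0)"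

definition is_subrep :: "('v, 'a) quiver_rel \<Rightarrow> ('v \<Rightarrow> nat) \<Rightarrow> ('a \<Rightarrow> nat \<Rightarrow> nat \<Rightarrow> complex)
    \<Rightarrow> ('v \<Rightarrow> cvec set) \<Rightarrow> bool" where
  "is_subrep Q d B S \<longleftrightarrow>
     (\<forall>v\<in>verts Q. vsubspace (S v) \<and> S v \<subseteq> carrier_sp (d v)) \<and>
     (\<forall>a\<in>arrs Q. mat_app (d (tgt Q a)) (d (src Q a)) (B a) ` S (src Q a) \<subseteq> S (tgt Q a))"

definition nonzero_proper :: "('v, 'a) quiver_rel \<Rightarrow> ('v \<Rightarrow> nat) \<Rightarrow> ('v \<Rightarrow> cvec set) \<Rightarrow> bool" where
  "nonzero_proper Q d S \<longleftrightarrow>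
     (\<exists>v\<in>verts Q. S v \<noteq> {0}) \<and> (\<exists>v\<in>verts Q. S v \<noteq> carrier_sp (d v))"

text \<open>Enhanced quiver: Inl v are the old vertices, Inr k the vertex (0,k);
  arrow Inr k goes (0,k) -> (0,k+1) for k < L and (0,L) -> 0 for k = L.\<close>
definition enhanced :: "('v, 'a) quiver_rel \<Rightarrow> 'v \<Rightarrow> nat \<Rightarrow> ('v + nat, 'a + nat) quiver_rel" where
  "enhanced Q z L =
    \<lparr> verts = Inl ` verts Q \<union> Inr ` {1..L},
      arrs = Inl ` arrs Q \<union> Inr ` {1..L},
      src = case_sum (\<lambda>a. Inl (src Q a)) (\<lambda>k. Inr k),
      tgt = case_sum (\<lambda>a. Inl (tgt Q a)) (\<lambda>k. if k < L then Inr (k + 1) else Inl z),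
      rels = (\<lambda>(u, w, ts). (Inl u, Inl w, map (\<lambda>(c, p). (c, map Inl p)) ts)) ` rels Q \<rparr>"

definition zeta_ext :: "('v, 'a) quiver_rel \<Rightarrow> 'v \<Rightarrow> ('v \<Rightarrow> nat) \<Rightarrow> ('v \<Rightarrow> real) \<Rightarrow> 'v \<Rightarrow> real" where
  "zeta_ext Q infv \<alpha> \<zeta> v =
     (if v = infv then - (\<Sum>i\<in>verts Q - {infv}. \<zeta> i * real (\<alpha> i)) else \<zeta> v)"

text \<open>(zeta,eta)-semistability of a representation B of the enhanced quiver
  with dimension vector case_sum alpha beta, in cleared-denominator form.\<close>
definition semistable :: "('v, 'a) quiver_rel \<Rightarrow> 'v \<Rightarrow> 'v \<Rightarrow> nat \<Rightarrow> ('v \<Rightarrow> nat) \<Rightarrow> (nat \<Rightarrow> nat)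
    \<Rightarrow> ('v \<Rightarrow> real) \<Rightarrow> (nat \<Rightarrow> rat) \<Rightarrow> ('a + nat \<Rightarrow> nat \<Rightarrow> nat \<Rightarrow> complex) \<Rightarrow> bool" where
  "semistable Q infv z L \<alpha> \<beta> \<zeta> \<eta> B \<longleftrightarrow>
     (\<forall>S. is_subrep (enhanced Q z L) (case_sum \<alpha> \<beta>) B S \<and>
          nonzero_proper (enhanced Q z L) (case_sum \<alpha> \<beta>) S \<longrightarrow>
        ((\<Sum>v\<in>verts Q. zeta_ext Q infv \<alpha> \<zeta> v * real (vdim (S (Inl v))))
           + (\<Sum>k=1..L. real_of_rat (\<eta> k) * real (vdim (S (Inr k)))))
          * real (\<Sum>v\<in>verts Q. \<alpha> v)
        - (\<Sum>k=1..L. real_of_rat (\<eta> k) * real (\<beta> k))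
          * real (\<Sum>v\<in>verts Q. vdim (S (Inl v))) \<le> 0)"

end

theory Submission
  imports Defs
begin

text \<open>The kernel of the arrow leaving \<open>(0,k)\<close> is a subrepresentation concentrated at \<open>(0,k)\<close>,
  because no other arrow starts there. It contributes nothing to \<open>V\<close>, so its slope numerator
  is \<open>\<eta>\<^sub>k \<cdot> dim K \<cdot> dim V\<close>, which is positive unless \<open>K = 0\<close>; semistability therefore forces
  every arrow of the chain to be injective. The last arrow goes between spaces of the same
  dimension \<open>\<alpha>\<^sub>0\<close>, so it is an isomorphism.\<close>

lemma (in vector_space) dim_eq_0_iff_subset_0:
  assumes "S \<subseteq> span T" and "finite T"
  shows "dim S = 0 \<longleftrightarrow> S \<subseteq> {0}"
proof
  assume "dim S = 0"
  obtain C where C: "C \<subseteq> S" "independent C" "S \<subseteq> span C" "card C = dim S"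
    using basis_exists by blast
  have "finite C"
    using independent_span_bound[OF assms(2) C(2)] C(1) assms(1) by blast
  with \<open>dim S = 0\<close> C(4) have "C = {}" by simp
  with C(3) show "S \<subseteq> {0}" by simp
next
  assume "S \<subseteq> {0}"
  then show "dim S = 0"
    using dim_le_card[of S "{}"] by simp
qed

lemma (in vector_space) span_eq_if_independent_card_eq:
  assumes "finite T" and "independent S" and "S \<subseteq> span T" and "card S = card T"
  shows "span S = span T"
proof -
  have "T \<subseteq> span S"
  proof
    fix y assume "y \<in> T"
    show "y \<in> span S"
    proof (rule ccontr)
      assume y: "y \<notin> span S"
      then have "y \<notin> S" using span_base by blast
      have "independent (insert y S)" using y assms(2) by (rule independent_insertI)
      moreover have "insert y S \<subseteq> span T" using \<open>y \<in> T\<close> assms(3) span_base by blast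
      ultimately have "finite (insert y S) \<and> card (insert y S) \<le> card T"
        by (rule independent_span_bound[OF assms(1)])
      with \<open>y \<notin> S\<close> assms(4) show False by auto
    qed
  qed
  with assms(3) show ?thesis by (rule span_eq[THEN iffD2, OF conjI])
qed

interpretation cv: vector_space cscale
  unfolding vector_space_def cscale_def by (auto simp: fun_eq_iff algebra_simps)

lemma module_hom_mat_app: "module_hom cscale cscale (mat_app m n M)"
proof -
  have "module_hom_axioms cscale cscale (mat_app m n M)"
    unfolding module_hom_axioms_def mat_app_def cscale_def
    by (auto simp: fun_eq_iff algebra_simps sum.distrib sum_distrib_left)
  then show ?thesis by (simp add: module_hom_def cv.module_axioms)
qed

lemma mat_app_zero [simp]: "mat_app m n M 0 = 0"
  by (simp add: mat_app_def fun_eq_iff)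

lemma zero_in_carrier_sp [simp]: "0 \<in> carrier_sp n"
  by (simp add: carrier_sp_def)

lemma mat_app_in_carrier_sp: "mat_app m n M x \<in> carrier_sp m"
  by (simp add: mat_app_def carrier_sp_def)

lemma subspace_carrier_sp: "cv.subspace (carrier_sp n)"
  unfolding cv.subspace_def carrier_sp_def cscale_def by auto

definition unit_cvec :: "nat \<Rightarrow> cvec" where
  "unit_cvec j = (\<lambda>i. if i = j then 1 else 0)"

lemma inj_unit_cvec: "inj unit_cvec"
  by (auto simp: inj_def unit_cvec_def fun_eq_iff split: if_splits)

lemma sum_cvec_apply: "(\<Sum>x\<in>A. f x) j = (\<Sum>x\<in>A. (f x :: cvec) j)"
  by (induction A rule: infinite_finite_induct) auto

lemma sum_unit_cvec_apply: "(\<Sum>j<n. cscale (c j) (unit_cvec j)) i = (if i < n then c i else 0)"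
proof -
  have "(\<Sum>j<n. c j * (if i = j then 1 else 0)) = (\<Sum>j<n. if i = j then c j else 0)"
    by (rule sum.cong) auto
  then show ?thesis by (simp add: sum_cvec_apply cscale_def unit_cvec_def)
qed

lemma carrier_sp_eq_span: "carrier_sp n = cv.span (unit_cvec ` {..<n})"
proof
  show "carrier_sp n \<subseteq> cv.span (unit_cvec ` {..<n})"
  proof
    fix x assume "x \<in> carrier_sp n"
    then have "x = (\<Sum>j<n. cscale (x j) (unit_cvec j))"
      by (auto simp: fun_eq_iff sum_unit_cvec_apply carrier_sp_def)
    also have "\<dots> \<in> cv.span (unit_cvec ` {..<n})"
      by (intro cv.span_sum cv.span_scale cv.span_base) auto
    finally show "x \<in> cv.span (unit_cvec ` {..<n})" .
  qed
  show "cv.span (unit_cvec ` {..<n}) \<subseteq> carrier_sp n"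
    by (rule cv.span_minimal[OF _ subspace_carrier_sp]) (auto simp: carrier_sp_def unit_cvec_def)
qed

lemma independent_unit_cvecs: "cv.independent (unit_cvec ` {..<n})"
proof (rule cv.independent_if_scalars_zero)
  fix c x assume sum0: "(\<Sum>x\<in>unit_cvec ` {..<n}. cscale (c x) x) = 0"
    and "x \<in> unit_cvec ` {..<n}"
  then obtain j where "j < n" and x: "x = unit_cvec j" by auto
  have "(\<Sum>x\<in>unit_cvec ` {..<n}. cscale (c x) x) = (\<Sum>i<n. cscale (c (unit_cvec i)) (unit_cvec i))"
    by (simp add: sum.reindex inj_on_subset[OF inj_unit_cvec])
  with sum0 \<open>j < n\<close> show "c x = 0"
    using sum_unit_cvec_apply[where c = "c \<circ> unit_cvec" and i = j and n = n] x by (simp add: o_def)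
qed simp

lemma vdim_eq_0_iff:
  assumes "S \<subseteq> carrier_sp n"
  shows "vdim S = 0 \<longleftrightarrow> S \<subseteq> {0}"
  unfolding vdim_def using assms carrier_sp_eq_span by (intro cv.dim_eq_0_iff_subset_0) auto

lemma vdim_zero_space [simp]: "vdim {0} = 0"
  by (simp add: vdim_eq_0_iff[of _ 0] carrier_sp_def)

lemma carrier_sp_neq_zero_space:
  assumes "n \<noteq> 0"
  shows "carrier_sp n \<noteq> {0}"
proof -
  have "unit_cvec 0 \<in> carrier_sp n" using assms by (simp add: carrier_sp_def unit_cvec_def)
  moreover have "unit_cvec 0 \<noteq> 0" by (auto simp: unit_cvec_def fun_eq_iff)
  ultimately show ?thesis by blast
qed

lemma vsubspace_zero_space: "vsubspace {0}"
  unfolding vsubspace_def cv.subspace_def cscale_def by (auto simp: fun_eq_iff)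

lemma vsubspace_kernel_mat_app: "vsubspace {x \<in> carrier_sp n. mat_app m n M x = 0}"
proof -
  interpret module_hom cscale cscale "mat_app m n M" by (rule module_hom_mat_app)
  have "cv.subspace (carrier_sp n \<inter> {x. mat_app m n M x = 0})"
    by (intro cv.subspace_inter subspace_carrier_sp subspace_kernel)
  then show ?thesis by (simp add: vsubspace_def Int_def)
qed

lemma inj_on_mat_app_iff_kernel:
  "inj_on (mat_app m n M) (carrier_sp n) \<longleftrightarrow> {x \<in> carrier_sp n. mat_app m n M x = 0} \<subseteq> {0}"
proof -
  interpret module_hom cscale cscale "mat_app m n M" by (rule module_hom_mat_app)
  show ?thesis using inj_on_iff_eq_0[OF subspace_carrier_sp] by blast
qed

lemma bij_betw_if_inj_on_mat_app:
  assumes inj: "inj_on (mat_app n n M) (carrier_sp n)"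
  shows "bij_betw (mat_app n n M) (carrier_sp n) (carrier_sp n)"
proof -
  interpret module_hom cscale cscale "mat_app n n M" by (rule module_hom_mat_app)
  let ?f = "mat_app n n M" and ?E = "unit_cvec ` {..<n}"
  have inj_span: "inj_on ?f (cv.span ?E)" using inj by (simp add: carrier_sp_eq_span)
  have "cv.span (?f ` ?E) = cv.span ?E"
  proof (rule cv.span_eq_if_independent_card_eq)
    show "cv.independent (?f ` ?E)"
      using independent_unit_cvecs inj_span by (rule independent_injective_image)
    show "?f ` ?E \<subseteq> cv.span ?E"
      using mat_app_in_carrier_sp by (auto simp: carrier_sp_eq_span[symmetric])
    show "card (?f ` ?E) = card ?E"
      using inj_span cv.span_superset by (intro card_image) (rule inj_on_subset)
  qed simp
  then have "?f ` carrier_sp n = carrier_sp n"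
    by (simp add: carrier_sp_eq_span span_image)
  with inj show ?thesis by (simp add: bij_betw_def)
qed

abbreviation arrow_map ::
    "('v, 'a) quiver_rel \<Rightarrow> ('v \<Rightarrow> nat) \<Rightarrow> ('a \<Rightarrow> nat \<Rightarrow> nat \<Rightarrow> complex) \<Rightarrow> 'a \<Rightarrow> cvec \<Rightarrow> cvec" where
  "arrow_map Q d B a \<equiv> mat_app (d (tgt Q a)) (d (src Q a)) (B a)"

definition kernel_at_source ::
    "('v, 'a) quiver_rel \<Rightarrow> ('v \<Rightarrow> nat) \<Rightarrow> ('a \<Rightarrow> nat \<Rightarrow> nat \<Rightarrow> complex) \<Rightarrow> 'a \<Rightarrow> 'v \<Rightarrow> cvec set" where
  "kernel_at_source Q d B a v =
     (if v = src Q a then {x \<in> carrier_sp (d v). arrow_map Q d B a x = 0} else {0})"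

lemma is_subrep_kernel_at_source:
  assumes "\<forall>b\<in>arrs Q. src Q b = src Q a \<longrightarrow> b = a"
  shows "is_subrep Q d B (kernel_at_source Q d B a)"
  using assms vsubspace_kernel_mat_app vsubspace_zero_space
  by (auto simp: is_subrep_def kernel_at_source_def)

lemma src_enhanced_Inr [simp]: "src (enhanced Q z L) (Inr k) = Inr k"
  by (simp add: enhanced_def)

lemma unique_arrow_out_of_chain_vertex:
  "\<forall>b\<in>arrs (enhanced Q z L). src (enhanced Q z L) b = Inr k \<longrightarrow> b = Inr k"
  by (auto simp: enhanced_def)

text \<open>A subrepresentation supported on the vertices \<open>(0,k)\<close> has no part in \<open>V\<close>, so only
  the \<open>\<eta>\<close>-term of its slope numerator survives.\<close>
lemma semistable_chain_subrep_le_0: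
  assumes "semistable Q infv z L \<alpha> \<beta> \<zeta> \<eta> B"
    and "is_subrep (enhanced Q z L) (case_sum \<alpha> \<beta>) B S"
    and "nonzero_proper (enhanced Q z L) (case_sum \<alpha> \<beta>) S"
    and "\<forall>v\<in>verts Q. S (Inl v) = {0}"
  shows "(\<Sum>k=1..L. real_of_rat (\<eta> k) * real (vdim (S (Inr k)))) * real (\<Sum>v\<in>verts Q. \<alpha> v) \<le> 0"
  using assms(1)[unfolded semistable_def, rule_format, OF conjI[OF assms(2,3)]] assms(4)
  by simp

lemma framed_quiver_finite_verts:
  assumes "framed_quiver Q infv"
  shows "finite (verts Q)" and "infv \<in> verts Q"
  using assms by (simp_all add: framed_quiver_def quiver_wf_def)

lemma semistable_imp_inj_on_chain_arrow:
  assumes "framed_quiver Q infv" and "\<alpha> infv \<noteq> 0"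
    and "k \<in> {1..L}" and "\<eta> k > 0"
    and "semistable Q infv z L \<alpha> \<beta> \<zeta> \<eta> B"
  shows "inj_on (arrow_map (enhanced Q z L) (case_sum \<alpha> \<beta>) B (Inr k)) (carrier_sp (\<beta> k))"
proof -
  let ?E = "enhanced Q z L" and ?d = "case_sum \<alpha> \<beta>"
  let ?S = "kernel_at_source ?E ?d B (Inr k)"
  have infv: "infv \<in> verts Q"
    using assms(1) by (rule framed_quiver_finite_verts)
  have "vdim (?S (Inr k)) = 0"
  proof (rule ccontr)
    assume dim_K: "vdim (?S (Inr k)) \<noteq> 0"
    have "is_subrep ?E ?d B ?S"
      by (rule is_subrep_kernel_at_source) (simp add: unique_arrow_out_of_chain_vertex)
    moreover have "nonzero_proper ?E ?d ?S"
      unfolding nonzero_proper_def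
    proof
      show "\<exists>v\<in>verts ?E. ?S v \<noteq> {0}"
        using assms(3) dim_K by (intro bexI[of _ "Inr k"]) (auto simp: enhanced_def)
      show "\<exists>v\<in>verts ?E. ?S v \<noteq> carrier_sp (?d v)"
        using infv assms(2) carrier_sp_neq_zero_space
        by (intro bexI[of _ "Inl infv"]) (auto simp: enhanced_def kernel_at_source_def)
    qed
    moreover have "\<forall>v\<in>verts Q. ?S (Inl v) = {0}"
      by (simp add: kernel_at_source_def)
    ultimately have le_0: "(\<Sum>j=1..L. real_of_rat (\<eta> j) * real (vdim (?S (Inr j))))
        * real (\<Sum>v\<in>verts Q. \<alpha> v) \<le> 0"
      by (rule semistable_chain_subrep_le_0[OF assms(5)])
    have "(\<Sum>j=1..L. real_of_rat (\<eta> j) * real (vdim (?S (Inr j))))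
        = (\<Sum>j=1..L. if j = k then real_of_rat (\<eta> k) * real (vdim (?S (Inr k))) else 0)"
      by (rule sum.cong) (auto simp: kernel_at_source_def)
    also have "\<dots> = real_of_rat (\<eta> k) * real (vdim (?S (Inr k)))"
      using assms(3) by simp
    finally have "real_of_rat (\<eta> k) * real (vdim (?S (Inr k))) * real (\<Sum>v\<in>verts Q. \<alpha> v) \<le> 0"
      using le_0 by (simp only:)
    moreover have "real (\<Sum>v\<in>verts Q. \<alpha> v) > 0"
      using member_le_sum[OF infv, of \<alpha>] framed_quiver_finite_verts(1)[OF assms(1)] assms(2)
      by (simp del: of_nat_sum)
    ultimately show False
      using assms(4) dim_K by (simp add: mult_le_0_iff)
  qed
  then show ?thesis
    by (simp add: inj_on_mat_app_iff_kernel vdim_eq_0_iff[of _ "\<beta> k"] kernel_at_source_def)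
qed

theorem lemma3p1:
  fixes Q :: "('v, 'a) quiver_rel" and infv z :: 'v and L :: nat
    and \<alpha> :: "'v \<Rightarrow> nat" and \<beta> :: "nat \<Rightarrow> nat"
    and \<zeta> :: "'v \<Rightarrow> real" and \<eta> :: "nat \<Rightarrow> rat"
    and B :: "'a + nat \<Rightarrow> nat \<Rightarrow> nat \<Rightarrow> complex"
  assumes "framed_quiver Q infv"
    and "\<alpha> infv = 1"
    and "z \<in> verts Q" and "z \<noteq> infv"
    and "L \<ge> 1" and "L \<ge> \<alpha> z"
    and "\<beta> 1 \<le> 1" and "\<beta> L = \<alpha> z"
    and "\<forall>k\<in>{2..L - 1}. \<beta> (k - 1) \<le> \<beta> k \<and> \<beta> k \<le> \<beta> (k - 1) + 1"
    and "\<forall>k\<in>{1..L}. \<eta> k > 0"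
    and "is_rep (enhanced Q z L) (case_sum \<alpha> \<beta>) B"
    and "semistable Q infv z L \<alpha> \<beta> \<zeta> \<eta> B"
  shows "bij_betw (mat_app (\<alpha> z) (\<beta> L) (B (Inr L))) (carrier_sp (\<beta> L)) (carrier_sp (\<alpha> z))
    \<and> (\<forall>k\<in>{1..<L}. inj_on (mat_app (\<beta> (k + 1)) (\<beta> k) (B (Inr k))) (carrier_sp (\<beta> k)))"
proof -
  have inj: "inj_on (arrow_map (enhanced Q z L) (case_sum \<alpha> \<beta>) B (Inr k)) (carrier_sp (\<beta> k))"
    if "k \<in> {1..L}" for k
    using assms(1,2,10,12) that by (intro semistable_imp_inj_on_chain_arrow) auto
  have "inj_on (mat_app (\<beta> L) (\<beta> L) (B (Inr L))) (carrier_sp (\<beta> L))"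
    using inj[of L] assms(5,8) by (simp add: enhanced_def)
  then have "bij_betw (mat_app (\<alpha> z) (\<beta> L) (B (Inr L))) (carrier_sp (\<beta> L)) (carrier_sp (\<alpha> z))"
    using assms(8) by (simp add: bij_betw_if_inj_on_mat_app)
  moreover have "inj_on (mat_app (\<beta> (k + 1)) (\<beta> k) (B (Inr k))) (carrier_sp (\<beta> k))"
    if "k \<in> {1..<L}" for k
    using inj[of k] that by (simp add: enhanced_def)
  ultimately show ?thesis by blast
qed

end
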